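(* Let $X,X'$ and $Y$ be nonempty sets and let $F\colon X^*\to Y$ be a standard and preassociative function. Let $g\colon X'\to X$ be any function and let $\mathbf{a}\in Y\setminus\mathrm{ran}(F^{\flat})$. Define $H\colon X'^*\to Y$ by $H(\varepsilon)=\mathbf{a}$ and $H_n(x_1,\ldots,x_n)=F_n(g(x_1),\ldots,g(x_n))$ for every integer $n\geqslant 1$. Then $H$ is standard and preassociative.
   Context: For a nonempty set $Z$, $Z^*=\bigcup_{n\geqslant 0}Z^n$ is the set of all finite tuples over $Z$, with $Z^0=\{\varepsilon\}$, $\varepsilon$ the empty tuple. For tuples $\mathbf{x},\mathbf{y}$, $F(\mathbf{x},\mathbf{y})$ denotes $F$ applied to the concatenation of $\mathbf{x}$ and $\mathbf{y}$ (and similarly for more tuples); concatenation with $\varepsilon$ leaves a tuple unchanged. For $F\colon Z^*\to Y$, $F_n=F|_{Z^n}$ and $F^{\flat}=F|_{Z^*\setminus\{\varepsilon\}}$. $F$ is standard if $F(\mathbf{x})=F(\varepsilon)$ holds only if $\mathbf{x}=\varepsilon$. $F$ is preassociative if for all $\mathbf{x},\mathbf{y},\mathbf{y}',\mathbf{z}\in Z^*$, $F(\mathbf{y})=F(\mathbf{y}')$ implies $F(\mathbf{x},\mathbf{y},\mathbf{z})=F(\mathbf{x},\mathbf{y}',\mathbf{z})$. *)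

theory Defs
  imports Main
begin

text \<open>Tuples over a set Z are modelled as lists whose elements lie in Z (lists Z);
  the empty tuple is the empty list, concatenation is append.\<close>

definition standard_on :: "'a set \<Rightarrow> ('a list \<Rightarrow> 'b) \<Rightarrow> bool" where
  "standard_on Z F \<longleftrightarrow> (\<forall>xs \<in> lists Z. F xs = F [] \<longrightarrow> xs = [])"

definition preassociative_on :: "'a set \<Rightarrow> ('a list \<Rightarrow> 'b) \<Rightarrow> bool" where
  "preassociative_on Z F \<longleftrightarrow>
     (\<forall>x \<in> lists Z. \<forall>y \<in> lists Z. \<forall>y' \<in> lists Z. \<forall>z \<in> lists Z.
        F y = F y' \<longrightarrow> F (x @ y @ z) = F (x @ y' @ z))"

end

theory Submission
  imports Defs
begin

text \<open>Composing with g letter by letter commutes with concatenation, so preassociativity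
  of F passes to F \<circ> map g. Changing the value at the empty tuple to a value a that
  F \<circ> map g never takes on nonempty tuples makes the empty tuple the only one with
  value a, which is standardness; and an equality H y = H y' then forces y, y' to be both
  empty or both nonempty, so preassociativity survives.\<close>

lemma preassociative_on_map:
  assumes "preassociative_on X F" and "g ` X' \<subseteq> X"
  shows "preassociative_on X' (\<lambda>xs. F (map g xs))"
  unfolding preassociative_on_def
proof (intro ballI impI)
  fix x y y' z assume "x \<in> lists X'" "y \<in> lists X'" "y' \<in> lists X'" "z \<in> lists X'"
    and "F (map g y) = F (map g y')"
  moreover have "map g xs \<in> lists X" if "xs \<in> lists X'" for xs
    using that assms(2) by (auto simp: image_subset_iff)
  ultimately show "F (map g (x @ y @ z)) = F (map g (x @ y' @ z))"
    using assms(1) unfolding preassociative_on_def by simp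
qed

lemma standard_on_if_fresh_at_Nil:
  assumes agree: "\<forall>xs \<in> lists Z. xs \<noteq> [] \<longrightarrow> H xs = G xs"
    and fresh: "H [] \<notin> G ` (lists Z - {[]})"
  shows "standard_on Z H"
  unfolding standard_on_def
proof (intro ballI impI)
  fix xs assume "xs \<in> lists Z" and "H xs = H []"
  then show "xs = []"
    using agree fresh by (metis DiffI image_eqI singletonD)
qed

lemma preassociative_on_if_fresh_at_Nil:
  assumes pa: "preassociative_on Z G"
    and agree: "\<forall>xs \<in> lists Z. xs \<noteq> [] \<longrightarrow> H xs = G xs"
    and fresh: "H [] \<notin> G ` (lists Z - {[]})"
  shows "preassociative_on Z H"
  unfolding preassociative_on_def
proof (intro ballI impI)
  fix x y y' z assume lists: "x \<in> lists Z" "y \<in> lists Z" "y' \<in> lists Z" "z \<in> lists Z"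
    and eq: "H y = H y'"
  have std: "standard_on Z H"
    using agree fresh by (rule standard_on_if_fresh_at_Nil)
  have "y = [] \<longleftrightarrow> y' = []"
    using std lists eq unfolding standard_on_def by metis
  show "H (x @ y @ z) = H (x @ y' @ z)"
  proof (cases "y = []")
    case True
    with \<open>y = [] \<longleftrightarrow> y' = []\<close> show ?thesis by simp
  next
    case False
    with \<open>y = [] \<longleftrightarrow> y' = []\<close> have "y' \<noteq> []" by simp
    have "G y = G y'"
      using eq agree lists False \<open>y' \<noteq> []\<close> by auto
    then have "G (x @ y @ z) = G (x @ y' @ z)"
      using pa lists unfolding preassociative_on_def by blast
    then show ?thesis
      using agree lists False \<open>y' \<noteq> []\<close> by simp
  qed
qed

theorem proposition3p4:
  fixes X :: "'a set" and X' :: "'c set" and Y :: "'b set"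
    and F :: "'a list \<Rightarrow> 'b" and g :: "'c \<Rightarrow> 'a" and a :: 'b
    and H :: "'c list \<Rightarrow> 'b"
  assumes "X \<noteq> {}" and "X' \<noteq> {}" and "Y \<noteq> {}"
    and "\<forall>xs \<in> lists X. F xs \<in> Y"
    and "standard_on X F" and "preassociative_on X F"
    and "\<forall>x \<in> X'. g x \<in> X"
    and "a \<in> Y" and "a \<notin> F ` (lists X - {[]})"
    and "H [] = a"
    and "\<forall>xs \<in> lists X'. xs \<noteq> [] \<longrightarrow> H xs = F (map g xs)"
  shows "standard_on X' H \<and> preassociative_on X' H"
proof -
  let ?G = "\<lambda>xs. F (map g xs)"
  have "g ` X' \<subseteq> X"
    using assms(7) by auto
  then have pa: "preassociative_on X' ?G"
    by (rule preassociative_on_map[OF assms(6)])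
  have "map g xs \<in> lists X - {[]}" if "xs \<in> lists X' - {[]}" for xs
    using that \<open>g ` X' \<subseteq> X\<close> by (auto simp: image_subset_iff)
  then have "?G ` (lists X' - {[]}) \<subseteq> F ` (lists X - {[]})"
    by blast
  then have fresh: "H [] \<notin> ?G ` (lists X' - {[]})"
    using assms(9,10) by blast
  show ?thesis
    using standard_on_if_fresh_at_Nil[OF assms(11) fresh]
      preassociative_on_if_fresh_at_Nil[OF pa assms(11) fresh] by simp
qed

end
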